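(* There exist constants $C>0$ and $n_0$ such that for every $n\ge n_0$ and every assignment $x:V\to\{-1,1\}$, we have $F_4\ge F_2^2-\frac{C}{n}$, where $F_2=\mathbb E_{(\mathbf v_1,\mathbf v_2)\sim\mathcal D_2}[x_{\mathbf v_1}x_{\mathbf v_2}]$ and $F_4=\mathbb E_{(\mathbf v_1,\dots,\mathbf v_4)\sim\mathcal D_4}[x_{\mathbf v_1}x_{\mathbf v_2}x_{\mathbf v_3}x_{\mathbf v_4}]$.
   Context: Let $\mathbf e_1,\dots,\mathbf e_n$ be the standard basis of $\mathbb R^n$ and $V=\{\frac{1}{\sqrt3}(b_1\mathbf e_i+b_2\mathbf e_j+b_3\mathbf e_k): b_1,b_2,b_3\in\{-1,1\},\ 1\le i<j<k\le n\}$. For $k<n/2$, $\mathcal D_k$ is the distribution on $V^k$ obtained by sampling $2k+1$ distinct indices $i_1,\dots,i_{2k+1}\in[n]$ uniformly at random, sampling independent uniform signs $b_1,\dots,b_{2k+1}\in\{-1,1\}$, and returning $(\mathbf v_1,\dots,\mathbf v_k)$ with $\mathbf v_j=\frac{1}{\sqrt3}(b_1\mathbf e_{i_1}+b_{2j}\mathbf e_{i_{2j}}+b_{2j+1}\mathbf e_{i_{2j+1}})$. *)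

theory Defs
  imports "HOL-Probability.Probability"
begin

text \<open>Vectors of R^n are represented as functions nat => real supported on the
index set [n] = {1..n}. The vector (b1 e_i + b2 e_j + b3 e_k)/sqrt 3:\<close>
definition vec3 :: "nat \<Rightarrow> nat \<Rightarrow> nat \<Rightarrow> real \<Rightarrow> real \<Rightarrow> real \<Rightarrow> (nat \<Rightarrow> real)" where
  "vec3 i j k b1 b2 b3 = (\<lambda>t. (b1 * of_bool (t = i) + b2 * of_bool (t = j) + b3 * of_bool (t = k)) / sqrt 3)"

definition Vset :: "nat \<Rightarrow> (nat \<Rightarrow> real) set" where
  "Vset n = {vec3 i j k b1 b2 b3 | i j k b1 b2 b3.
      1 \<le> i \<and> i < j \<and> j < k \<and> k \<le> n \<and> b1 \<in> {-1, 1} \<and> b2 \<in> {-1, 1} \<and> b3 \<in> {-1, 1}}"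

definition Dspace :: "nat \<Rightarrow> nat \<Rightarrow> ((nat \<Rightarrow> nat) \<times> (nat \<Rightarrow> real)) set" where
  "Dspace n k = {(idx, b). idx \<in> {1..2*k+1} \<rightarrow>\<^sub>E {1..n} \<and> inj_on idx {1..2*k+1}
                          \<and> b \<in> {1..2*k+1} \<rightarrow>\<^sub>E {-1, 1}}"

definition Dvec :: "(nat \<Rightarrow> nat) \<Rightarrow> (nat \<Rightarrow> real) \<Rightarrow> nat \<Rightarrow> (nat \<Rightarrow> real)" where
  "Dvec idx b j = vec3 (idx 1) (idx (2*j)) (idx (2*j+1)) (b 1) (b (2*j)) (b (2*j+1))"

definition Fk :: "nat \<Rightarrow> nat \<Rightarrow> ((nat \<Rightarrow> real) \<Rightarrow> real) \<Rightarrow> real" where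
  "Fk n k x = measure_pmf.expectation (pmf_of_set (Dspace n k))
                (\<lambda>(idx, b). \<Prod>j\<in>{1..k}. x (Dvec idx b j))"

end

theory Submission
  imports Defs
begin

text \<open>Drop the requirement that the 2k+1 indices of a sample be distinct. This changes the
sample space only by a fraction O(k^2/n) of its size, so each F_k moves by O(k^2/n). In the
relaxed space a sample is a centre (i_1, b_1) together with k independent pairs, so the relaxed
average is the k-th moment of a single function w of the centre, and (E w^2)^2 <= E w^4 by
Cauchy-Schwarz.\<close>

lemma abs_sum_le_card:
  fixes f :: "'a \<Rightarrow> real"
  assumes "\<And>a. a \<in> A \<Longrightarrow> \<bar>f a\<bar> \<le> 1"
  shows "\<bar>sum f A\<bar> \<le> card A"
proof -
  have "\<bar>sum f A\<bar> \<le> (\<Sum>a\<in>A. \<bar>f a\<bar>)" by (rule sum_abs)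
  also have "\<dots> \<le> (\<Sum>a\<in>A. 1)" using assms by (rule sum_mono)
  finally show ?thesis by simp
qed

lemma abs_mean_le_1:
  fixes f :: "'a \<Rightarrow> real"
  assumes "\<And>a. a \<in> A \<Longrightarrow> \<bar>f a\<bar> \<le> 1"
  shows "\<bar>sum f A / card A\<bar> \<le> 1"
  using abs_sum_le_card[of A f] assms by (cases "card A = 0") (simp_all add: divide_le_eq_1)

lemma abs_mean_diff_subset_le:
  fixes f :: "'a \<Rightarrow> real"
  assumes "finite A" "B \<subseteq> A" "B \<noteq> {}" and bound: "\<And>a. a \<in> A \<Longrightarrow> \<bar>f a\<bar> \<le> 1"
  shows "\<bar>sum f A / card A - sum f B / card B\<bar> \<le> 2 * (real (card A) - card B) / card A"
proof -
  have "finite B" using assms finite_subset by blast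
  define a where "a = sum f B"
  define b where "b = sum f (A - B)"
  define N where "N = real (card A)"
  define s where "s = real (card B)"
  have "card B \<le> card A" using assms by (simp add: card_mono)
  then have pos: "0 < s" "s \<le> N"
    using \<open>finite B\<close> \<open>B \<noteq> {}\<close> by (auto simp: s_def N_def card_gt_0_iff)
  have "\<bar>b\<bar> \<le> N - s"
    using abs_sum_le_card[of "A - B" f] bound card_Diff_subset[OF \<open>finite B\<close> \<open>B \<subseteq> A\<close>] \<open>card B \<le> card A\<close>
    by (simp add: b_def N_def s_def)
  moreover have "\<bar>a\<bar> \<le> s"
    using abs_sum_le_card[of B f] bound \<open>B \<subseteq> A\<close> by (auto simp: a_def s_def)
  moreover have "sum f A = a + b"
    using sum.subset_diff[OF \<open>B \<subseteq> A\<close> \<open>finite A\<close>, of f] by (simp add: a_def b_def)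
  then have mean_diff: "sum f A / card A - sum f B / card B = b / N - a * (N - s) / (N * s)"
    using pos by (simp add: a_def N_def s_def field_simps)
  moreover have "\<bar>a\<bar> * (N - s) / (N * s) \<le> s * (N - s) / (N * s)"
    using pos \<open>\<bar>a\<bar> \<le> s\<close> by (intro divide_right_mono mult_right_mono) auto
  ultimately have "\<bar>b / N\<bar> + \<bar>a * (N - s) / (N * s)\<bar> \<le> (N - s) / N + (N - s) / N"
    using pos by (intro add_mono) (auto simp: abs_mult intro!: divide_right_mono)
  also have "\<dots> = 2 * (N - s) / N"
    by simp
  finally have "\<bar>b / N - a * (N - s) / (N * s)\<bar> \<le> 2 * (N - s) / N"
    by (rule order.trans[OF abs_triangle_ineq4])
  with mean_diff show ?thesis by (simp add: N_def s_def)
qed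

lemma mean_square_le:
  fixes f :: "'a \<Rightarrow> real"
  shows "(sum f A / card A)\<^sup>2 \<le> (\<Sum>a\<in>A. (f a)\<^sup>2) / card A"
proof (cases "card A = 0")
  case False
  have "(sum f A)\<^sup>2 \<le> (\<Sum>a\<in>A. (f a)\<^sup>2) * card A"
    using Cauchy_Schwarz_ineq_sum[of f "\<lambda>_. 1" A] by simp
  then show ?thesis
    using False by (simp add: power2_eq_square divide_le_eq field_simps)
qed simp

lemma power2_diff_le_abs_diff:
  fixes u v :: real
  assumes "\<bar>u\<bar> \<le> 1" "\<bar>v\<bar> \<le> 1"
  shows "u\<^sup>2 - v\<^sup>2 \<le> 2 * \<bar>u - v\<bar>"
proof -
  have "u\<^sup>2 - v\<^sup>2 \<le> \<bar>u - v\<bar> * \<bar>u + v\<bar>"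
    by (simp add: power2_eq_square algebra_simps flip: abs_mult)
  also have "\<dots> \<le> \<bar>u - v\<bar> * 2"
    using assms by (intro mult_left_mono) auto
  finally show ?thesis by simp
qed

lemma card_PiE_collision_le:
  assumes "finite I" "finite A" "r \<in> I" "s \<in> I" "r \<noteq> s"
  shows "card {g \<in> I \<rightarrow>\<^sub>E A. g r = g s} \<le> card A ^ (card I - 1)"
proof -
  have "{g \<in> I \<rightarrow>\<^sub>E A. g r = g s} \<subseteq> (\<lambda>h. h(s := h r)) ` (I - {s} \<rightarrow>\<^sub>E A)"
  proof
    fix g assume g: "g \<in> {g \<in> I \<rightarrow>\<^sub>E A. g r = g s}"
    have "g = (restrict g (I - {s}))(s := restrict g (I - {s}) r)"
      using g assms by (auto simp: PiE_def extensional_def)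
    moreover have "restrict g (I - {s}) \<in> I - {s} \<rightarrow>\<^sub>E A"
      using g by auto
    ultimately show "g \<in> (\<lambda>h. h(s := h r)) ` (I - {s} \<rightarrow>\<^sub>E A)" by blast
  qed
  then have "card {g \<in> I \<rightarrow>\<^sub>E A. g r = g s} \<le> card (I - {s} \<rightarrow>\<^sub>E A)"
    using assms by (meson card_image_le card_mono finite_PiE finite_Diff finite_imageI order.trans)
  also have "\<dots> = card A ^ (card I - 1)"
    using assms by (simp add: card_PiE)
  finally show ?thesis .
qed

lemma card_PiE_not_inj_on_le:
  assumes "finite I" "finite A"
  shows "card {g \<in> I \<rightarrow>\<^sub>E A. \<not> inj_on g I} \<le> card I ^ 2 * card A ^ (card I - 1)"
proof -
  define P where "P = {(r, s) \<in> I \<times> I. r \<noteq> s}"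
  have "finite P" using assms by (simp add: P_def finite_subset[of _ "I \<times> I"] subset_iff)
  have "{g \<in> I \<rightarrow>\<^sub>E A. \<not> inj_on g I} \<subseteq> (\<Union>p\<in>P. {g \<in> I \<rightarrow>\<^sub>E A. g (fst p) = g (snd p)})"
    by (auto simp: P_def inj_on_def)
  then have "card {g \<in> I \<rightarrow>\<^sub>E A. \<not> inj_on g I} \<le> card (\<Union>p\<in>P. {g \<in> I \<rightarrow>\<^sub>E A. g (fst p) = g (snd p)})"
    using assms \<open>finite P\<close> by (intro card_mono) (auto simp: finite_PiE)
  also have "\<dots> \<le> (\<Sum>p\<in>P. card {g \<in> I \<rightarrow>\<^sub>E A. g (fst p) = g (snd p)})"
    by (rule card_UN_le[OF \<open>finite P\<close>])
  also have "\<dots> \<le> card P * card A ^ (card I - 1)"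
    using sum_bounded_above[of P _ "card A ^ (card I - 1)"] card_PiE_collision_le[OF assms]
    by (force simp: P_def)
  also have "card P \<le> card I ^ 2"
    using card_mono[of "I \<times> I" P] assms by (auto simp: P_def card_cartesian_product power2_eq_square)
  finally show ?thesis by simp
qed

lemma bij_betw_PiE_zip:
  "bij_betw (\<lambda>(f, g). \<lambda>i\<in>I. (f i, g i)) (PiE I A \<times> PiE I B) (PiE I (\<lambda>i. A i \<times> B i))"
  by (rule bij_betw_byWitness[where f' = "\<lambda>h. (\<lambda>i\<in>I. fst (h i), \<lambda>i\<in>I. snd (h i))"])
    (auto simp: PiE_iff extensional_def fun_eq_iff mem_Times_iff)

lemma center_pair_cases:
  fixes t k :: nat
  assumes "t \<in> {1..2*k+1}"
  obtains "t = 1" | j where "j \<in> {1..k}" "t = 2*j" | j where "j \<in> {1..k}" "t = 2*j+1"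
proof (cases "even t")
  case True
  then obtain j where "t = 2*j" by (rule evenE)
  with assms that(2)[of j] show ?thesis by auto
next
  case False
  then obtain j where "t = 2*j+1" by (rule oddE)
  with assms that(1) that(3)[of j] show ?thesis by (cases "j = 0") auto
qed

lemma bij_betw_PiE_center_pairs:
  fixes k :: nat and A :: "'a set"
  shows "bij_betw (\<lambda>g. (g 1, \<lambda>j\<in>{1..k}. (g (2*j), g (2*j+1))))
    ({1..2*k+1} \<rightarrow>\<^sub>E A) (A \<times> ({1..k} \<rightarrow>\<^sub>E A \<times> A))"
proof -
  define join :: "'a \<times> (nat \<Rightarrow> 'a \<times> 'a) \<Rightarrow> nat \<Rightarrow> 'a" where
    "join = (\<lambda>(a, h). \<lambda>t\<in>{1..2*k+1}.
       if t = 1 then a else if even t then fst (h (t div 2)) else snd (h (t div 2)))"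
  show ?thesis
  proof (rule bij_betw_byWitness[where f' = join])
    show "\<forall>g\<in>{1..2*k+1} \<rightarrow>\<^sub>E A. join (g 1, \<lambda>j\<in>{1..k}. (g (2*j), g (2*j+1))) = g"
    proof (intro ballI ext)
      fix g t assume g: "g \<in> {1..2*k+1} \<rightarrow>\<^sub>E A"
      show "join (g 1, \<lambda>j\<in>{1..k}. (g (2*j), g (2*j+1))) t = g t"
      proof (cases "t \<in> {1..2*k+1}")
        case True
        then show ?thesis by (cases rule: center_pair_cases) (simp_all add: join_def)
      next
        case False
        then show ?thesis by (simp add: join_def PiE_arb[OF g False] del: atLeastAtMost_iff)
      qed
    qed
    show "\<forall>y\<in>A \<times> ({1..k} \<rightarrow>\<^sub>E A \<times> A). (join y 1, \<lambda>j\<in>{1..k}. (join y (2*j), join y (2*j+1))) = y"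
    proof
      fix y assume "y \<in> A \<times> ({1..k} \<rightarrow>\<^sub>E A \<times> A)"
      then obtain a h where y: "y = (a, h)" "h \<in> {1..k} \<rightarrow>\<^sub>E A \<times> A" by auto
      have "(\<lambda>j\<in>{1..k}. (join y (2*j), join y (2*j+1))) = h"
        using y by (auto simp: join_def fun_eq_iff PiE_arb[OF y(2)])
      then show "(join y 1, \<lambda>j\<in>{1..k}. (join y (2*j), join y (2*j+1))) = y"
        using y by (simp add: join_def)
    qed
    show "(\<lambda>g. (g 1, \<lambda>j\<in>{1..k}. (g (2*j), g (2*j+1)))) ` ({1..2*k+1} \<rightarrow>\<^sub>E A)
        \<subseteq> A \<times> ({1..k} \<rightarrow>\<^sub>E A \<times> A)"
      by (auto simp: PiE_iff)
    have "t div 2 \<in> {1..k}" if "t \<in> {1..2*k+1}" "t \<noteq> 1" for t :: nat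
      using that by auto
    then show "join ` (A \<times> ({1..k} \<rightarrow>\<^sub>E A \<times> A)) \<subseteq> {1..2*k+1} \<rightarrow>\<^sub>E A"
      by (force simp: join_def PiE_iff mem_Times_iff)
  qed
qed

lemma sum_PiE_center_pairs_prod:
  fixes f :: "'a \<Rightarrow> 'a \<Rightarrow> 'a \<Rightarrow> 'b::comm_semiring_1" and k :: nat
  assumes "finite A"
  shows "(\<Sum>g\<in>{1..2*k+1} \<rightarrow>\<^sub>E A. \<Prod>j\<in>{1..k}. f (g 1) (g (2*j)) (g (2*j+1)))
       = (\<Sum>a\<in>A. (\<Sum>(p, q)\<in>A \<times> A. f a p q) ^ k)"
proof -
  define F where "F = (\<lambda>(a, h). \<Prod>j\<in>{1..k}. case h j of (p, q) \<Rightarrow> f a p q)"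
  have "(\<Sum>g\<in>{1..2*k+1} \<rightarrow>\<^sub>E A. \<Prod>j\<in>{1..k}. f (g 1) (g (2*j)) (g (2*j+1)))
      = (\<Sum>g\<in>{1..2*k+1} \<rightarrow>\<^sub>E A. F (g 1, \<lambda>j\<in>{1..k}. (g (2*j), g (2*j+1))))"
    by (auto simp: F_def intro!: sum.cong prod.cong)
  also have "\<dots> = (\<Sum>y\<in>A \<times> ({1..k} \<rightarrow>\<^sub>E A \<times> A). F y)"
    by (rule sum.reindex_bij_betw[OF bij_betw_PiE_center_pairs])
  also have "\<dots> = (\<Sum>a\<in>A. \<Sum>h\<in>{1..k} \<rightarrow>\<^sub>E A \<times> A. F (a, h))"
    by (rule sum.cartesian_product')
  also have "\<dots> = (\<Sum>a\<in>A. \<Prod>j\<in>{1..k}. \<Sum>(p, q)\<in>A \<times> A. f a p q)"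
    using assms by (simp add: F_def prod_sum_PiE del: prod_constant)
  finally show ?thesis by simp
qed

lemma vec3_swap12: "vec3 i j k b1 b2 b3 = vec3 j i k b2 b1 b3"
  by (simp add: vec3_def fun_eq_iff algebra_simps)

lemma vec3_swap23: "vec3 i j k b1 b2 b3 = vec3 i k j b1 b3 b2"
  by (simp add: vec3_def fun_eq_iff algebra_simps)

lemma vec3_in_Vset:
  assumes "i \<in> {1..n}" "j \<in> {1..n}" "k \<in> {1..n}" "distinct [i, j, k]"
    and "b1 \<in> {-1, 1}" "b2 \<in> {-1, 1}" "b3 \<in> {-1, 1}"
  shows "vec3 i j k b1 b2 b3 \<in> Vset n"
proof -
  have sorted: "vec3 i j k b1 b2 b3 \<in> Vset n"
    if "1 \<le> i" "i < j" "j < k" "k \<le> n" "b1 \<in> {-1, 1}" "b2 \<in> {-1, 1}" "b3 \<in> {-1, 1}"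
    for i j k b1 b2 b3
    using that unfolding Vset_def by blast
  have "i < j \<or> j < i" "i < k \<or> k < i" "j < k \<or> k < j"
    using assms(4) by auto
  then show ?thesis
    using assms by (smt (verit) atLeastAtMost_iff sorted vec3_swap12 vec3_swap23 order.strict_trans)
qed

lemma Dvec_in_Vset:
  assumes "(idx, b) \<in> Dspace n k" "j \<in> {1..k}"
  shows "Dvec idx b j \<in> Vset n"
proof -
  have I: "1 \<in> {1..2*k+1}" "2*j \<in> {1..2*k+1}" "2*j+1 \<in> {1..2*k+1}"
    using assms(2) by auto
  have inj: "inj_on idx {1..2*k+1}" and idx: "idx \<in> {1..2*k+1} \<rightarrow>\<^sub>E {1..n}"
    and b: "b \<in> {1..2*k+1} \<rightarrow>\<^sub>E {-1, 1}"
    using assms(1) by (auto simp: Dspace_def)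
  have "distinct [idx 1, idx (2*j), idx (2*j+1)]"
    using I assms(2) by (simp add: inj_on_eq_iff[OF inj])
  then show ?thesis
    unfolding Dvec_def using PiE_mem[OF idx] PiE_mem[OF b] I by (intro vec3_in_Vset) auto
qed

lemma Dspace_nonempty:
  assumes "2*k+1 \<le> n"
  shows "Dspace n k \<noteq> {}"
proof -
  have "(\<lambda>t\<in>{1..2*k+1}. t, \<lambda>_\<in>{1..2*k+1}. 1) \<in> Dspace n k"
    using assms by (auto simp: Dspace_def inj_on_def)
  then show ?thesis by blast
qed

definition Dspace_relaxed :: "nat \<Rightarrow> nat \<Rightarrow> ((nat \<Rightarrow> nat) \<times> (nat \<Rightarrow> real)) set" where
  "Dspace_relaxed n k = ({1..2*k+1} \<rightarrow>\<^sub>E {1..n}) \<times> ({1..2*k+1} \<rightarrow>\<^sub>E {-1, 1})"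

lemma finite_Dspace_relaxed: "finite (Dspace_relaxed n k)"
  by (simp add: Dspace_relaxed_def finite_PiE)

lemma Dspace_subset_relaxed: "Dspace n k \<subseteq> Dspace_relaxed n k"
  by (auto simp: Dspace_def Dspace_relaxed_def)

lemma card_Dspace_relaxed_minus_Dspace_le:
  "(real (card (Dspace_relaxed n k)) - card (Dspace n k)) / card (Dspace_relaxed n k) \<le> (2 * real k + 1)^2 / n"
proof (cases "n = 0")
  case False
  define c where "c = card ({1..2*k+1} \<rightarrow>\<^sub>E {-1, 1::real})"
  have "c > 0" by (simp add: c_def card_PiE)
  have card_relaxed: "card (Dspace_relaxed n k) = n^(2*k+1) * c"
    by (simp add: Dspace_relaxed_def c_def card_cartesian_product card_PiE)
  have bad: "Dspace_relaxed n k - Dspace n k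
      = {idx \<in> {1..2*k+1} \<rightarrow>\<^sub>E {1..n}. \<not> inj_on idx {1..2*k+1}} \<times> ({1..2*k+1} \<rightarrow>\<^sub>E {-1, 1})"
    by (auto simp: Dspace_def Dspace_relaxed_def)
  have "card (Dspace_relaxed n k) - card (Dspace n k) = card (Dspace_relaxed n k - Dspace n k)"
    using card_Diff_subset[OF finite_subset[OF Dspace_subset_relaxed finite_Dspace_relaxed] Dspace_subset_relaxed]
    by simp
  also have "\<dots> = card {idx \<in> {1..2*k+1} \<rightarrow>\<^sub>E {1..n}. \<not> inj_on idx {1..2*k+1}} * c"
    unfolding bad c_def by (rule card_cartesian_product)
  also have "\<dots> \<le> (2*k+1)^2 * n^(2*k) * c"
    using card_PiE_not_inj_on_le[of "{1..2*k+1}" "{1..n}"] by simp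
  finally have "real (card (Dspace_relaxed n k) - card (Dspace n k)) \<le> (2*k+1)^2 * n^(2*k) * c"
    by (metis of_nat_le_iff)
  then have "real (card (Dspace_relaxed n k)) - card (Dspace n k) \<le> (2*k+1)^2 * n^(2*k) * c"
    using card_mono[OF finite_Dspace_relaxed Dspace_subset_relaxed, of n k] by simp
  then show ?thesis
    using False \<open>c > 0\<close> by (simp add: card_relaxed divide_simps) (simp add: algebra_simps)
qed (simp add: Dspace_relaxed_def PiE_empty_range[of 1])

definition Dprod :: "((nat \<Rightarrow> real) \<Rightarrow> real) \<Rightarrow> nat \<Rightarrow> (nat \<Rightarrow> nat) \<times> (nat \<Rightarrow> real) \<Rightarrow> real" where
  "Dprod y k = (\<lambda>(idx, b). \<Prod>j\<in>{1..k}. y (Dvec idx b j))"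

lemma abs_Dprod_le_1:
  assumes "\<And>v. \<bar>y v\<bar> \<le> 1"
  shows "\<bar>Dprod y k w\<bar> \<le> 1"
  using assms by (auto simp: Dprod_def abs_prod intro!: prod_le_1 split: prod.split)

lemma Fk_eq_mean:
  assumes "2*k+1 \<le> n" and "\<forall>v\<in>Vset n. x v = y v"
  shows "Fk n k x = sum (Dprod y k) (Dspace n k) / card (Dspace n k)"
proof -
  have "finite (Dspace n k)"
    using finite_subset[OF Dspace_subset_relaxed finite_Dspace_relaxed] .
  then have "Fk n k x = (\<Sum>(idx, b)\<in>Dspace n k. \<Prod>j\<in>{1..k}. x (Dvec idx b j)) / card (Dspace n k)"
    unfolding Fk_def by (rule integral_pmf_of_set[OF Dspace_nonempty[OF assms(1)]])
  also have "(\<Sum>(idx, b)\<in>Dspace n k. \<Prod>j\<in>{1..k}. x (Dvec idx b j)) = sum (Dprod y k) (Dspace n k)"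
    using assms(2) Dvec_in_Vset by (auto simp: Dprod_def intro!: sum.cong prod.cong)
  finally show ?thesis .
qed

definition relaxed_mean :: "nat \<Rightarrow> nat \<Rightarrow> ((nat \<Rightarrow> real) \<Rightarrow> real) \<Rightarrow> real" where
  "relaxed_mean n k y = sum (Dprod y k) (Dspace_relaxed n k) / card (Dspace_relaxed n k)"

lemma abs_relaxed_mean_minus_Fk_le:
  assumes "2*k+1 \<le> n" and "\<forall>v\<in>Vset n. x v = y v" and "\<And>v. \<bar>y v\<bar> \<le> 1"
  shows "\<bar>relaxed_mean n k y - Fk n k x\<bar> \<le> 2 * (2 * real k + 1)^2 / n"
proof -
  have "\<bar>relaxed_mean n k y - Fk n k x\<bar>
      \<le> 2 * ((real (card (Dspace_relaxed n k)) - card (Dspace n k)) / card (Dspace_relaxed n k))"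
    unfolding relaxed_mean_def Fk_eq_mean[OF assms(1,2)]
    using abs_mean_diff_subset_le[OF finite_Dspace_relaxed Dspace_subset_relaxed Dspace_nonempty[OF assms(1)]]
      abs_Dprod_le_1[OF assms(3)] by simp
  also have "\<dots> \<le> 2 * (2 * real k + 1)^2 / n"
    using mult_left_mono[OF card_Dspace_relaxed_minus_Dspace_le[of n k], of 2] by simp
  finally show ?thesis .
qed

lemma abs_Fk_le_1:
  assumes "2*k+1 \<le> n" and "\<forall>v\<in>Vset n. x v = y v" and "\<And>v. \<bar>y v\<bar> \<le> 1"
  shows "\<bar>Fk n k x\<bar> \<le> 1"
  unfolding Fk_eq_mean[OF assms(1,2)] using abs_Dprod_le_1[OF assms(3)] by (rule abs_mean_le_1)

lemma sum_Dprod_Dspace_relaxed: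
  fixes n k :: nat
  defines "Q \<equiv> {1..n} \<times> {-1, 1::real}"
  shows "sum (Dprod y k) (Dspace_relaxed n k)
    = (\<Sum>c\<in>Q. (\<Sum>(p, q)\<in>Q \<times> Q. y (vec3 (fst c) (fst p) (fst q) (snd c) (snd p) (snd q))) ^ k)"
proof -
  define zip :: "(nat \<Rightarrow> nat) \<times> (nat \<Rightarrow> real) \<Rightarrow> nat \<Rightarrow> nat \<times> real" where
    "zip = (\<lambda>(idx, b). \<lambda>i\<in>{1..2*k+1}. (idx i, b i))"
  define f where "f c p q = y (vec3 (fst c) (fst p) (fst q) (snd c) (snd p) (snd q))" for c p q
  have "sum (Dprod y k) (Dspace_relaxed n k)
      = (\<Sum>w\<in>Dspace_relaxed n k. \<Prod>j\<in>{1..k}. f (zip w 1) (zip w (2*j)) (zip w (2*j+1)))"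
    by (auto simp: Dprod_def Dvec_def zip_def f_def intro!: sum.cong prod.cong)
  also have "\<dots> = (\<Sum>g\<in>{1..2*k+1} \<rightarrow>\<^sub>E Q. \<Prod>j\<in>{1..k}. f (g 1) (g (2*j)) (g (2*j+1)))"
    unfolding Dspace_relaxed_def Q_def zip_def by (rule sum.reindex_bij_betw[OF bij_betw_PiE_zip])
  also have "\<dots> = (\<Sum>c\<in>Q. (\<Sum>(p, q)\<in>Q \<times> Q. f c p q) ^ k)"
    by (rule sum_PiE_center_pairs_prod) (simp add: Q_def)
  finally show ?thesis by (simp add: f_def)
qed

lemma abs_relaxed_mean_le_1:
  assumes "\<And>v. \<bar>y v\<bar> \<le> 1"
  shows "\<bar>relaxed_mean n k y\<bar> \<le> 1"
  unfolding relaxed_mean_def using abs_Dprod_le_1[OF assms] by (rule abs_mean_le_1)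

lemma relaxed_mean_moments:
  fixes n :: nat
  obtains w where "\<And>k. relaxed_mean n k y = (\<Sum>c\<in>{1..n} \<times> {-1, 1::real}. w c ^ k) / card ({1..n} \<times> {-1, 1::real})"
proof
  fix k
  define Q where "Q = {1..n} \<times> {-1, 1::real}"
  define W where "W c = (\<Sum>(p, q)\<in>Q \<times> Q. y (vec3 (fst c) (fst p) (fst q) (snd c) (snd p) (snd q)))" for c
  have "card (Dspace_relaxed n k) = card ({1..2*k+1} \<rightarrow>\<^sub>E Q)"
    unfolding Dspace_relaxed_def Q_def by (rule bij_betw_same_card[OF bij_betw_PiE_zip])
  then have "card (Dspace_relaxed n k) = card Q ^ (2*k+1)"
    by (simp add: card_PiE)
  then have "relaxed_mean n k y = (\<Sum>c\<in>Q. W c ^ k) / card Q ^ (2*k+1)"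
    by (simp add: relaxed_mean_def sum_Dprod_Dspace_relaxed W_def Q_def)
  also have "\<dots> = (\<Sum>c\<in>Q. (W c / card Q ^ 2) ^ k) / card Q"
    by (simp add: power_divide sum_divide_distrib[symmetric] divide_divide_eq_left
        power_add power_mult[symmetric] mult.commute)
  finally show "relaxed_mean n k y = (\<Sum>c\<in>Q. (W c / card Q ^ 2) ^ k) / card Q" .
qed

lemma power2_relaxed_mean_2_le_relaxed_mean_4: "(relaxed_mean n 2 y)\<^sup>2 \<le> relaxed_mean n 4 y"
proof -
  obtain w where w: "\<And>k. relaxed_mean n k y = (\<Sum>c\<in>{1..n} \<times> {-1, 1::real}. w c ^ k) / card ({1..n} \<times> {-1, 1::real})"
    using relaxed_mean_moments by blast
  show ?thesis
    using mean_square_le[of "\<lambda>c. (w c)\<^sup>2" "{1..n} \<times> {-1, 1::real}"]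
    by (simp add: w power_mult[symmetric])
qed

theorem mainTheorem8:
  shows "\<exists>C::real. C > 0 \<and> (\<exists>n0::nat. \<forall>n \<ge> n0. \<forall>x :: (nat \<Rightarrow> real) \<Rightarrow> real.
           (\<forall>v \<in> Vset n. x v \<in> {-1, 1}) \<longrightarrow> Fk n 4 x \<ge> (Fk n 2 x)^2 - C / real n)"
proof (intro exI[of _ "262::real"] conjI exI[of _ "9::nat"] allI impI)
  fix n :: nat and x :: "(nat \<Rightarrow> real) \<Rightarrow> real"
  assume n: "9 \<le> n" and x: "\<forall>v\<in>Vset n. x v \<in> {-1, 1}"
  \<comment> \<open>x is unconstrained off Vset, where the relaxed samples may land\<close>
  define y where "y v = (if v \<in> Vset n then x v else 0)" for v
  have xy: "\<forall>v\<in>Vset n. x v = y v" and y: "\<And>v. \<bar>y v\<bar> \<le> 1"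
    using x by (auto simp: y_def)
  have F2: "\<bar>Fk n 2 x - relaxed_mean n 2 y\<bar> \<le> 50 / n"
    using abs_relaxed_mean_minus_Fk_le[of 2 n x y] n xy y by (simp add: abs_minus_commute)
  have F4: "\<bar>relaxed_mean n 4 y - Fk n 4 x\<bar> \<le> 162 / n"
    using abs_relaxed_mean_minus_Fk_le[of 4 n x y] n xy y by simp
  have "(Fk n 2 x)\<^sup>2 - (relaxed_mean n 2 y)\<^sup>2 \<le> 2 * \<bar>Fk n 2 x - relaxed_mean n 2 y\<bar>"
    using n xy y by (intro power2_diff_le_abs_diff abs_Fk_le_1 abs_relaxed_mean_le_1) auto
  moreover have "(relaxed_mean n 2 y)\<^sup>2 \<le> relaxed_mean n 4 y"
    by (rule power2_relaxed_mean_2_le_relaxed_mean_4)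
  moreover have "262 / real n = 2 * (50 / n) + 162 / n"
    by simp
  ultimately show "Fk n 4 x \<ge> (Fk n 2 x)\<^sup>2 - 262 / n"
    using F2 abs_le_D1[OF F4] by (smt (verit))
qed simp

end
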